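(* Let $N\ge1$, $c>0$, and $\mathbf w=(f_0,\alpha,f_2,\dots,f_N)^T$ with $\alpha\in(-1,1)$ and $f_0\ne0$. Then every eigenvalue of $c\,\tilde{\mathbf D}(\mathbf w)^{-1}\tilde{\mathbf M}(\mathbf w)\tilde{\mathbf D}(\mathbf w)$ (i.e. every characteristic speed of the system $\frac1c\tilde{\mathbf D}\partial_t\mathbf w+\tilde{\mathbf M}\tilde{\mathbf D}\partial_z\mathbf w=\tilde{\mathbf S}$) lies in $[-c,c]$.
   Context: For a parameter $\alpha\in(-1,1)$ define on $[-1,1]$ the weights $\omega(\mu)=(1+\alpha\mu)^{-4}$ and $\tilde\omega(\mu)=(1+\alpha\mu)^{-5}$. Let $\{\phi_k\}_{k\ge0}$ (resp. $\{\tilde\phi_k\}_{k\ge0}$) be the monic orthogonal polynomials on $[-1,1]$ with respect to $\omega$ (resp. $\tilde\omega$); their coefficients depend smoothly on $\alpha$. Set $K_{j,k}=\int_{-1}^1\mu^j\phi_k\,\omega\,d\mu$, $\tilde K_{j,k}=\int_{-1}^1\mu^j\tilde\phi_k\,\tilde\omega\,d\mu$, $\beta_k=K_{k,k}/\tilde K_{k,k}$, $\gamma_k=\tilde K_{k,k}^{-1}\,\partial K_{k,k}/\partial\alpha$. Given $\mathbf w=(f_0,\alpha,f_2,\dots,f_N)^T$, set $f_1:=0$. The $(N+1)\times(N+1)$ matrix $\tilde{\mathbf D}=\tilde{\mathbf D}(\mathbf w)$ (rows/columns indexed $0,\dots,N$) has entries $\tilde D_{0,0}=\beta_0$, $\tilde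 D_{0,1}=\gamma_0f_0$, $\tilde D_{1,0}=\alpha$, $\tilde D_{1,1}=-4f_0$; for $2\le i\le N$: $\tilde D_{i,1}=\gamma_if_i-4f_{i-1}$, $\tilde D_{i,i}=\beta_i$, and $\tilde D_{i,i-1}=\alpha$ when $i\ge3$; all other entries are $0$. Let $\tilde{\boldsymbol\Lambda}=\mathrm{diag}(\tilde K_{0,0},\dots,\tilde K_{N,N})$ and $\tilde{\mathbf M}=\tilde{\boldsymbol\Lambda}^{-1}\mathbf G$ where $G_{i,j}=\int_{-1}^1\mu\,\tilde\phi_i\tilde\phi_j\,\tilde\omega\,d\mu$, $0\le i,j\le N$. *)

theory Defs
  imports "HOL-Analysis.Analysis" "Jordan_Normal_Form.Char_Poly"
    "Jordan_Normal_Form.Gauss_Jordan_Elimination"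
begin

text \<open>Weight (1 + a mu)^(-m) on [-1,1]; m = 4 gives omega, m = 5 gives tilde omega.\<close>
definition wt :: "nat \<Rightarrow> real \<Rightarrow> real \<Rightarrow> real" where
  "wt m a \<mu> = 1 / (1 + a * \<mu>) ^ m"

definition OP :: "nat \<Rightarrow> real \<Rightarrow> nat \<Rightarrow> real poly" where
  "OP m a k = (THE p. degree p = k \<and> lead_coeff p = 1 \<and>
      (\<forall>j<k. integral {-1..1} (\<lambda>\<mu>. \<mu> ^ j * poly p \<mu> * wt m a \<mu>) = 0))"

definition Kmom :: "nat \<Rightarrow> real \<Rightarrow> nat \<Rightarrow> nat \<Rightarrow> real" where
  "Kmom m a j k = integral {-1..1} (\<lambda>\<mu>. \<mu> ^ j * poly (OP m a k) \<mu> * wt m a \<mu>)"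

definition beta :: "real \<Rightarrow> nat \<Rightarrow> real" where
  "beta a k = Kmom 4 a k k / Kmom 5 a k k"

definition gamma :: "real \<Rightarrow> nat \<Rightarrow> real" where
  "gamma a k = deriv (\<lambda>b. Kmom 4 b k k) a / Kmom 5 a k k"

text \<open>The matrix tilde D(w) for w = (f_0, alpha, f_2, ..., f_N); the value f 1 is
  ignored and replaced by 0 (convention f_1 := 0).\<close>
definition Dt :: "nat \<Rightarrow> (nat \<Rightarrow> real) \<Rightarrow> real \<Rightarrow> real Matrix.mat" where
  "Dt N f0 a = (let f = f0(1 := 0) in Matrix.mat (N+1) (N+1) (\<lambda>(i,j).
     if i = 0 \<and> j = 0 then beta a 0
     else if i = 0 \<and> j = 1 then gamma a 0 * f 0
     else if i = 1 \<and> j = 0 then a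
     else if i = 1 \<and> j = 1 then -4 * f 0
     else if 2 \<le> i \<and> j = 1 then gamma a i * f i - 4 * f (i - 1)
     else if 2 \<le> i \<and> j = i then beta a i
     else if 3 \<le> i \<and> j = i - 1 then a
     else 0))"

definition Lambdat :: "nat \<Rightarrow> real \<Rightarrow> real Matrix.mat" where
  "Lambdat N a = Matrix.mat (N+1) (N+1) (\<lambda>(i,j). if i = j then Kmom 5 a i i else 0)"

definition Gt :: "nat \<Rightarrow> real \<Rightarrow> real Matrix.mat" where
  "Gt N a = Matrix.mat (N+1) (N+1) (\<lambda>(i,j).
     integral {-1..1} (\<lambda>\<mu>. \<mu> * poly (OP 5 a i) \<mu> * poly (OP 5 a j) \<mu> * wt 5 a \<mu>))"

definition Mt :: "nat \<Rightarrow> real \<Rightarrow> real Matrix.mat" where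
  "Mt N a = the (mat_inverse (Lambdat N a)) * Gt N a"

end

theory Submission
  imports Defs
begin

text \<open>
  If \<open>4 \<beta>\<^sub>0 + \<alpha> \<gamma>\<^sub>0 \<noteq> 0\<close>, the matrix \<open>D\<close> is invertible: its leading \<open>2 \<times> 2\<close> block has
  determinant \<open>-f\<^sub>0 (4 \<beta>\<^sub>0 + \<alpha> \<gamma>\<^sub>0)\<close> and the remaining rows are lower triangular with
  diagonal \<open>\<beta>\<^sub>i \<noteq> 0\<close>. In fact \<open>4 \<beta>\<^sub>0 + \<alpha> \<gamma>\<^sub>0 = 4\<close>, which follows from differentiating
  \<open>K\<^sub>0\<^sub>0 = \<integral> (1 + \<alpha> \<mu>)\<^sup>-\<^sup>4 d\<mu>\<close> under the integral sign.
  Hence \<open>c D\<^sup>-\<^sup>1 M D\<close> is similar to \<open>c \<Lambda>\<^sup>-\<^sup>1 G\<close>, and its eigenvalues \<open>z\<close> solve the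
  generalised problem \<open>c G v = z \<Lambda> v\<close>. In the orthogonal basis \<open>\<phi>\<^sub>i\<close>, \<open>\<Lambda>\<close> is the Gram
  matrix of \<open>\<langle>p, q\<rangle> = \<integral> p q (1 + \<alpha> \<mu>)\<^sup>-\<^sup>5 d\<mu>\<close> and \<open>G\<close> that of \<open>\<langle>\<mu> p, q\<rangle>\<close>.
  Since \<open>\<bar>\<mu>\<bar> \<le> 1\<close> on
  \<open>[-1, 1]\<close>, the real symmetric form of \<open>G\<close> is dominated by that of \<open>\<Lambda>\<close>, so the
  Hermitian form of an eigenvector shows that \<open>z\<close> is real with \<open>\<bar>z\<bar> \<le> c\<close>.
\<close>

section \<open>A weighted inner product on polynomials\<close>

definition poly_inner :: "(real \<Rightarrow> real) \<Rightarrow> real poly \<Rightarrow> real poly \<Rightarrow> real" where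
  "poly_inner w p q = integral {-1..1} (\<lambda>x. w x * poly p x * poly q x)"

lemma poly_inner_commute: "poly_inner w p q = poly_inner w q p"
  unfolding poly_inner_def by (simp add: mult_ac)

lemma poly_inner_sum_left:
  assumes w: "continuous_on {-1..1} w" and I: "finite I"
  shows "poly_inner w (\<Sum>i\<in>I. Polynomial.smult (c i) (p i)) q = (\<Sum>i\<in>I. c i * poly_inner w (p i) q)"
proof -
  have "poly_inner w (\<Sum>i\<in>I. Polynomial.smult (c i) (p i)) q
      = integral {-1..1} (\<lambda>x. \<Sum>i\<in>I. c i * (w x * poly (p i) x * poly q x))"
    unfolding poly_inner_def poly_sum poly_smult
    by (rule integral_cong) (simp add: sum_distrib_left sum_distrib_right mult_ac)
  also have "\<dots> = (\<Sum>i\<in>I. integral {-1..1} (\<lambda>x. c i * (w x * poly (p i) x * poly q x)))"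
    by (rule integral_sum[OF I]) (intro integrable_continuous_interval continuous_intros w)
  finally show ?thesis by (simp add: poly_inner_def)
qed

lemma poly_inner_diff_left:
  assumes w: "continuous_on {-1..1} w"
  shows "poly_inner w (p - r) q = poly_inner w p q - poly_inner w r q"
proof -
  have "poly_inner w (p - r) q
      = integral {-1..1} (\<lambda>x. w x * poly p x * poly q x - w x * poly r x * poly q x)"
    unfolding poly_inner_def by (rule integral_cong) (simp add: algebra_simps)
  also have "\<dots> = poly_inner w p q - poly_inner w r q"
    unfolding poly_inner_def
    by (rule integral_diff) (intro integrable_continuous_interval continuous_intros w)+
  finally show ?thesis .
qed

lemma poly_inner_sum_sum:
  assumes w: "continuous_on {-1..1} w" and I: "finite I"
  shows "poly_inner w (\<Sum>i\<in>I. Polynomial.smult (x i) (p i)) (\<Sum>i\<in>I. Polynomial.smult (x i) (p i))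
       = (\<Sum>i\<in>I. \<Sum>j\<in>I. x i * x j * poly_inner w (p i) (p j))"
proof -
  let ?P = "\<Sum>i\<in>I. Polynomial.smult (x i) (p i)"
  have "poly_inner w (p i) ?P = (\<Sum>j\<in>I. x j * poly_inner w (p i) (p j))" for i
    by (subst (1 2) poly_inner_commute) (rule poly_inner_sum_left[OF w I])
  then show ?thesis
    unfolding poly_inner_sum_left[OF w I] by (simp add: sum_distrib_left mult.assoc)
qed

lemma poly_inner_self_pos:
  assumes w: "continuous_on {-1..1} w" and w_pos: "\<And>x. x \<in> {-1..1} \<Longrightarrow> w x > 0"
    and "p \<noteq> 0"
  shows "poly_inner w p p > 0"
proof -
  let ?g = "\<lambda>x. w x * poly p x * poly p x"
  have nonneg: "0 \<le> ?g x" if "x \<in> {-1..1}" for x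
    using w_pos[OF that] by (simp add: mult.assoc zero_le_mult_iff)
  have cont: "continuous_on {-1..1} ?g" by (intro continuous_intros w)
  have "poly_inner w p p \<noteq> 0"
  proof
    assume "poly_inner w p p = 0"
    then have zero: "\<forall>x\<in>{-1..1}. ?g x = 0"
      using integral_cbox_eq_0_iff[of "-1" 1 ?g] nonneg cont
      unfolding poly_inner_def cbox_interval by simp
    have "poly p x = 0" if "x \<in> {-1..1}" for x
    proof -
      have "w x * (poly p x * poly p x) = 0" using zero that by (simp add: mult.assoc)
      then show ?thesis using w_pos[OF that] by simp
    qed
    then have "{-1..1::real} \<subseteq> {x. poly p x = 0}" by blast
    then have "finite {-1..1::real}"
      using poly_roots_finite[OF \<open>p \<noteq> 0\<close>] finite_subset by blast
    then show False using infinite_Icc[of "-1::real" 1] by simp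
  qed
  moreover have "0 \<le> poly_inner w p p"
    unfolding poly_inner_def
    by (rule integral_nonneg) (auto intro!: integrable_continuous_interval cont nonneg)
  ultimately show ?thesis by simp
qed

lemma abs_poly_inner_mult_id_le:
  assumes w: "continuous_on {-1..1} w" and w_pos: "\<And>x. x \<in> {-1..1} \<Longrightarrow> w x > 0"
  shows "\<bar>poly_inner (\<lambda>x. x * w x) p p\<bar> \<le> poly_inner w p p"
proof -
  have bound: "\<bar>x * w x * poly p x * poly p x\<bar> \<le> w x * poly p x * poly p x"
    if "x \<in> {-1..1}" for x
  proof -
    have "\<bar>x * w x * poly p x * poly p x\<bar> = \<bar>x\<bar> * (w x * poly p x * poly p x)"
      using w_pos[OF that] by (simp add: abs_mult mult_ac)
    also have "\<dots> \<le> w x * poly p x * poly p x"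
      using that w_pos[OF that]
      by (intro mult_left_le_one_le) (simp_all add: mult.assoc zero_le_mult_iff abs_le_iff)
    finally show ?thesis .
  qed
  have "norm (integral {-1..1} (\<lambda>x. x * w x * poly p x * poly p x))
      \<le> integral {-1..1} (\<lambda>x. w x * poly p x * poly p x)"
    using bound
    by (intro integral_norm_bound_integral integrable_continuous_interval continuous_intros w) simp
  then show ?thesis unfolding poly_inner_def by simp
qed

section \<open>Monic orthogonal polynomials\<close>

definition orthogonal_below :: "(real \<Rightarrow> real) \<Rightarrow> nat \<Rightarrow> real poly \<Rightarrow> bool" where
  "orthogonal_below w k p \<longleftrightarrow> (\<forall>q. degree q < k \<longrightarrow> poly_inner w q p = 0)"

lemma orthogonal_belowI_monom:
  assumes w: "continuous_on {-1..1} w"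
    and monom: "\<And>j. j < k \<Longrightarrow> poly_inner w (monom 1 j) p = 0"
  shows "orthogonal_below w k p"
  unfolding orthogonal_below_def
proof (intro allI impI)
  fix q :: "real poly"
  assume q: "degree q < k"
  have "q = (\<Sum>i\<le>degree q. Polynomial.smult (coeff q i) (monom 1 i))"
    by (subst poly_as_sum_of_monoms[symmetric]) (simp add: smult_monom)
  then have "poly_inner w q p = (\<Sum>i\<le>degree q. coeff q i * poly_inner w (monom 1 i) p)"
    using poly_inner_sum_left[OF w] by (metis finite_atMost)
  also have "\<dots> = 0" using monom q by (intro sum.neutral) auto
  finally show "poly_inner w q p = 0" .
qed

lemma monic_degree_0_eq_1: "degree p = 0 \<Longrightarrow> lead_coeff p = 1 \<Longrightarrow> p = 1"
  by (metis degree_0_id one_pCons)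

lemma degree_diff_monic_less:
  assumes "degree p = k" "lead_coeff p = 1" "degree q = k" "lead_coeff q = 1" "k > 0"
  shows "degree (p - q) < k"
proof -
  have "degree (p - q) \<le> k - 1"
  proof (rule degree_le, intro allI impI)
    fix i assume "k - 1 < i"
    then have "i = k \<or> k < i" using assms(5) by auto
    then show "coeff (p - q) i = 0" using assms(1-4) by (auto simp: coeff_eq_0)
  qed
  then show ?thesis using assms(5) by simp
qed

lemma monic_family_spans:
  fixes P :: "nat \<Rightarrow> 'a::field poly"
  assumes "\<forall>i\<le>k. degree (P i) = i \<and> lead_coeff (P i) = 1" and "degree q \<le> k"
  shows "\<exists>d. q = (\<Sum>i\<le>k. Polynomial.smult (d i) (P i))"
  using assms
proof (induction k arbitrary: q)
  case 0
  then have "P 0 = 1" using monic_degree_0_eq_1 by blast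
  then have "q = Polynomial.smult (coeff q 0) (P 0)"
    using degree_0_id[of q] 0 by (simp add: one_pCons)
  then show ?case by (intro exI[of _ "\<lambda>_. coeff q 0"]) simp
next
  case (Suc k)
  let ?r = "q - Polynomial.smult (coeff q (Suc k)) (P (Suc k))"
  have "degree ?r \<le> k"
  proof (rule degree_le, intro allI impI)
    fix i assume "k < i"
    then consider "i = Suc k" | "Suc k < i" by linarith
    then show "coeff ?r i = 0"
    proof cases
      case 1
      have "coeff (P (Suc k)) (Suc k) = 1" using Suc.prems(1) by (metis le_refl)
      then show ?thesis using 1 by simp
    next
      case 2
      then show ?thesis using Suc.prems by (simp add: coeff_eq_0)
    qed
  qed
  then obtain d where d: "?r = (\<Sum>i\<le>k. Polynomial.smult (d i) (P i))"
    using Suc.IH Suc.prems(1) le_SucI by blast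
  have "q = (\<Sum>i\<le>Suc k. Polynomial.smult ((d(Suc k := coeff q (Suc k))) i) (P i))"
    using d by (simp add: algebra_simps)
  then show ?case by blast
qed

lemma monic_orthogonal_family_exists:
  assumes w: "continuous_on {-1..1} w" and w_pos: "\<And>x. x \<in> {-1..1} \<Longrightarrow> w x > 0"
  shows "\<exists>P. \<forall>i\<le>k. degree (P i) = i \<and> lead_coeff (P i) = 1 \<and> orthogonal_below w i (P i)"
proof (induction k)
  case 0
  show ?case by (intro exI[of _ "\<lambda>_. 1"]) (simp add: orthogonal_below_def)
next
  case (Suc k)
  then obtain P where P: "\<forall>i\<le>k. degree (P i) = i \<and> lead_coeff (P i) = 1 \<and> orthogonal_below w i (P i)"
    by blast
  have P_orth: "poly_inner w (P l) (P i) = 0" if "i \<le> k" "l \<le> k" "l \<noteq> i" for i l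
  proof (cases "l < i")
    case True
    then show ?thesis using P that unfolding orthogonal_below_def by simp
  next
    case False
    then have "i < l" using that by simp
    then show ?thesis using P that poly_inner_commute unfolding orthogonal_below_def by simp
  qed
  have P_nonzero: "P i \<noteq> 0" if "i \<le> k" for i
    using P that by (metis leading_coeff_0_iff zero_neq_one)
  \<comment> \<open>Gram--Schmidt step: subtract from \<open>x^(k+1)\<close> its projections onto \<open>P 0, \<dots>, P k\<close>.\<close>
  define c where "c i = poly_inner w (monom 1 (Suc k)) (P i) / poly_inner w (P i) (P i)" for i
  define S where "S = (\<Sum>i\<le>k. Polynomial.smult (c i) (P i))"
  define p where "p = monom 1 (Suc k) - S"
  have "degree S \<le> k" unfolding S_def
    by (rule degree_sum_le) (use P in \<open>auto intro: order.trans[OF degree_smult_le]\<close>)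
  then have coeff_S: "coeff S (Suc k) = 0" by (simp add: coeff_eq_0)
  have "degree p \<le> Suc k" unfolding p_def
    using \<open>degree S \<le> k\<close> by (intro degree_diff_le) (auto simp: degree_monom_eq)
  moreover have lead_p: "coeff p (Suc k) = 1" unfolding p_def using coeff_S by simp
  ultimately have degree_p: "degree p = Suc k" by (metis le_degree le_antisym zero_neq_one)
  have P_orth_p: "poly_inner w (P i) p = 0" if i: "i \<le> k" for i
  proof -
    have "poly_inner w S (P i) = (\<Sum>l\<le>k. c l * poly_inner w (P l) (P i))"
      unfolding S_def by (rule poly_inner_sum_left[OF w]) simp
    also have "\<dots> = c i * poly_inner w (P i) (P i)"
      using i P_orth by (subst sum.remove[of _ i]) (auto intro!: sum.neutral)
    also have "\<dots> = poly_inner w (monom 1 (Suc k)) (P i)"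
      unfolding c_def using poly_inner_self_pos[OF w w_pos P_nonzero[OF i]] by simp
    finally show ?thesis
      unfolding p_def by (subst poly_inner_commute) (simp add: poly_inner_diff_left[OF w])
  qed
  have "orthogonal_below w (Suc k) p"
    unfolding orthogonal_below_def
  proof (intro allI impI)
    fix q :: "real poly"
    assume "degree q < Suc k"
    moreover have "\<forall>i\<le>k. degree (P i) = i \<and> lead_coeff (P i) = 1" using P by blast
    ultimately obtain d where d: "q = (\<Sum>i\<le>k. Polynomial.smult (d i) (P i))"
      using monic_family_spans[of k P q] less_Suc_eq_le by blast
    show "poly_inner w q p = 0"
      unfolding d poly_inner_sum_left[OF w finite_atMost] using P_orth_p by simp
  qed
  then show ?case using P degree_p lead_p
    by (intro exI[of _ "P(Suc k := p)"]) (auto simp: le_Suc_eq)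
qed

lemma monic_orthogonal_unique:
  assumes w: "continuous_on {-1..1} w" and w_pos: "\<And>x. x \<in> {-1..1} \<Longrightarrow> w x > 0"
    and p: "degree p = k" "lead_coeff p = 1" "orthogonal_below w k p"
    and q: "degree q = k" "lead_coeff q = 1" "orthogonal_below w k q"
  shows "p = q"
proof (cases "k = 0")
  case True
  then show ?thesis using monic_degree_0_eq_1 p(1,2) q(1,2) by metis
next
  case False
  then have "degree (p - q) < k" using p q by (intro degree_diff_monic_less) auto
  have "poly_inner w (p - q) (p - q) = poly_inner w (p - q) p - poly_inner w (p - q) q"
    by (subst (1 2 3) poly_inner_commute) (rule poly_inner_diff_left[OF w])
  also have "\<dots> = 0"
    using p(3) q(3) \<open>degree (p - q) < k\<close> unfolding orthogonal_below_def by simp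
  finally have "poly_inner w (p - q) (p - q) = 0" .
  then show ?thesis using poly_inner_self_pos[OF w w_pos, of "p - q"] by force
qed

lemma one_plus_mult_pos:
  fixes a x :: real
  assumes "-1 < a" "a < 1" "x \<in> {-1..1}"
  shows "1 + a * x > 0"
proof -
  have "\<bar>x\<bar> \<le> 1" using assms(3) by auto
  then have "\<bar>a * x\<bar> \<le> \<bar>a\<bar>" by (simp add: abs_mult mult_left_le)
  then show ?thesis using assms(1,2) by linarith
qed

lemma wt_pos: "-1 < a \<Longrightarrow> a < 1 \<Longrightarrow> x \<in> {-1..1} \<Longrightarrow> wt m a x > 0"
  unfolding wt_def using one_plus_mult_pos[of a x] by simp

lemma continuous_on_wt:
  assumes "-1 < a" "a < 1"
  shows "continuous_on {-1..1} (wt m a)"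
  unfolding wt_def
  by (intro continuous_intros) (use one_plus_mult_pos[OF assms] in force)

lemma wt_Suc: "1 + a * x \<noteq> 0 \<Longrightarrow> wt m a x = (1 + a * x) * wt (Suc m) a x"
  unfolding wt_def by simp

lemma OP_monic_orthogonal:
  assumes a: "-1 < a" "a < 1"
  shows "degree (OP m a k) = k" "lead_coeff (OP m a k) = 1"
    "orthogonal_below (wt m a) k (OP m a k)"
proof -
  note w = continuous_on_wt[OF a, of m] and w_pos = wt_pos[OF a, of _ m]
  have integral_monom: "integral {-1..1} (\<lambda>\<mu>. \<mu> ^ j * poly p \<mu> * wt m a \<mu>)
      = poly_inner (wt m a) (monom 1 j) p" for j p
    unfolding poly_inner_def by (rule integral_cong) (simp add: poly_monom mult_ac)
  obtain P where P: "degree P = k" "lead_coeff P = 1" "orthogonal_below (wt m a) k P"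
    using monic_orthogonal_family_exists[OF w w_pos, of k] by blast
  have "OP m a k = P"
    unfolding OP_def
  proof (rule the_equality)
    show "degree P = k \<and> lead_coeff P = 1 \<and>
      (\<forall>j<k. integral {-1..1} (\<lambda>\<mu>. \<mu> ^ j * poly P \<mu> * wt m a \<mu>) = 0)"
      using P unfolding integral_monom orthogonal_below_def by (auto simp: degree_monom_eq)
  next
    fix p
    assume "degree p = k \<and> lead_coeff p = 1 \<and>
      (\<forall>j<k. integral {-1..1} (\<lambda>\<mu>. \<mu> ^ j * poly p \<mu> * wt m a \<mu>) = 0)"
    then show "p = P"
      using P by (intro monic_orthogonal_unique[OF w w_pos])
        (auto intro: orthogonal_belowI_monom[OF w] simp: integral_monom)
  qed
  then show "degree (OP m a k) = k" "lead_coeff (OP m a k) = 1"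
    "orthogonal_below (wt m a) k (OP m a k)" using P by simp_all
qed

lemma OP_orthogonal:
  assumes a: "-1 < a" "a < 1" and "i \<noteq> j"
  shows "poly_inner (wt m a) (OP m a i) (OP m a j) = 0"
proof (cases "i < j")
  case True
  then show ?thesis using OP_monic_orthogonal[OF a] unfolding orthogonal_below_def by simp
next
  case False
  then have "j < i" using assms(3) by simp
  then have "poly_inner (wt m a) (OP m a j) (OP m a i) = 0"
    using OP_monic_orthogonal[OF a] unfolding orthogonal_below_def by simp
  then show ?thesis by (metis poly_inner_commute)
qed

lemma Kmom_diag_eq:
  assumes a: "-1 < a" "a < 1"
  shows "Kmom m a k k = poly_inner (wt m a) (OP m a k) (OP m a k)"
proof -
  let ?p = "OP m a k"
  note OP = OP_monic_orthogonal[OF a, of m k]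
  \<comment> \<open>\<open>\<mu>^k\<close> differs from the monic \<open>?p\<close> by a polynomial of lower degree.\<close>
  have "poly_inner (wt m a) (?p - monom 1 k) ?p = 0"
  proof (cases "k = 0")
    case True
    then have "?p = 1" using OP(1,2) by (intro monic_degree_0_eq_1) simp_all
    then show ?thesis using True by (simp add: poly_inner_def one_pCons)
  next
    case False
    then have "degree (?p - monom 1 k) < k"
      using OP by (intro degree_diff_monic_less) (auto simp: degree_monom_eq)
    then show ?thesis using OP(3) unfolding orthogonal_below_def by blast
  qed
  moreover have "Kmom m a k k = poly_inner (wt m a) (monom 1 k) ?p"
    unfolding Kmom_def poly_inner_def by (rule integral_cong) (simp add: poly_monom mult_ac)
  ultimately show ?thesis
    by (simp add: poly_inner_diff_left[OF continuous_on_wt[OF a]])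
qed

lemma Kmom_diag_pos:
  assumes a: "-1 < a" "a < 1"
  shows "Kmom m a k k > 0"
proof -
  have "OP m a k \<noteq> 0"
    using OP_monic_orthogonal(2)[OF a, of m k] by (metis leading_coeff_0_iff zero_neq_one)
  then show ?thesis
    unfolding Kmom_diag_eq[OF a]
    using poly_inner_self_pos[OF continuous_on_wt[OF a, of m] wt_pos[OF a, of _ m]] by blast
qed

section \<open>The identity \<open>4 \<beta>\<^sub>0 + \<alpha> \<gamma>\<^sub>0 = 4\<close>\<close>

lemma wt_has_field_derivative:
  assumes "1 + b * \<mu> \<noteq> 0"
  shows "((\<lambda>b. wt m b \<mu>) has_field_derivative - (of_nat m * \<mu> * wt (Suc m) b \<mu>)) (at b within S)"
proof -
  have power: "of_nat m * X ^ (m - 1) * \<mu> * inverse ((X ^ m) ^ Suc (Suc 0))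
      = of_nat m * \<mu> * inverse (X ^ Suc m)" if "X \<noteq> 0" for X :: real
  proof (cases m)
    case (Suc n)
    have "(X ^ m) ^ Suc (Suc 0) = X ^ n * X ^ Suc m"
      unfolding Suc by (simp flip: power_add power_mult)
    then show ?thesis using that by (simp add: Suc field_simps)
  qed simp
  have "((\<lambda>b. inverse ((1 + b * \<mu>) ^ m)) has_field_derivative
      - (of_nat m * (1 + b * \<mu>) ^ (m - 1) * \<mu> * inverse (((1 + b * \<mu>) ^ m) ^ Suc (Suc 0))))
      (at b within S)"
    using assms by (auto intro!: DERIV_inverse_fun derivative_eq_intros)
  from this[unfolded power[OF assms]] show ?thesis
    unfolding wt_def by (simp add: inverse_eq_divide)
qed

lemma Kmom_0_0:
  assumes "-1 < a" "a < 1"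
  shows "Kmom m a 0 0 = integral {-1..1} (wt m a)"
proof -
  have "OP m a 0 = 1" using OP_monic_orthogonal(1,2)[OF assms] by (intro monic_degree_0_eq_1)
  then show ?thesis by (simp add: Kmom_def)
qed

lemma Kmom_0_0_has_field_derivative:
  assumes a: "-1 < a" "a < 1"
  shows "((\<lambda>b. Kmom m b 0 0) has_field_derivative
      integral {-1..1} (\<lambda>\<mu>. - (of_nat m * \<mu> * wt (Suc m) a \<mu>))) (at a)"
proof -
  let ?U = "{-1<..<1::real}"
  have nonzero: "1 + b * \<mu> \<noteq> 0" if "b \<in> ?U" "\<mu> \<in> cbox (-1) 1" for b \<mu>
    using one_plus_mult_pos[of b \<mu>] that by (simp add: cbox_interval)
  have "continuous_on (?U \<times> cbox (-1) 1) (\<lambda>p. - (of_nat m * snd p / (1 + fst p * snd p) ^ Suc m))"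
  proof (intro continuous_intros ballI)
    fix p :: "real \<times> real"
    assume "p \<in> ?U \<times> cbox (-1) 1"
    then show "(1 + fst p * snd p) ^ Suc m \<noteq> 0" using nonzero by (simp add: mem_Times_iff)
  qed
  then have cont: "continuous_on (?U \<times> cbox (-1) 1) (\<lambda>(b, \<mu>). - (of_nat m * \<mu> * wt (Suc m) b \<mu>))"
    by (simp add: case_prod_beta' wt_def)
  have "((\<lambda>b. integral (cbox (-1) 1) (wt m b)) has_field_derivative
      integral (cbox (-1) 1) (\<lambda>\<mu>. - (of_nat m * \<mu> * wt (Suc m) a \<mu>))) (at a within ?U)"
  proof (rule leibniz_rule_field_derivative[OF _ _ cont])
    show "((\<lambda>b. wt m b \<mu>) has_field_derivative - (of_nat m * \<mu> * wt (Suc m) b \<mu>)) (at b within ?U)"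
      if "b \<in> ?U" "\<mu> \<in> cbox (-1) 1" for b \<mu>
      using nonzero[OF that] by (rule wt_has_field_derivative)
    show "wt m b integrable_on cbox (-1) 1" if "b \<in> ?U" for b
      using that unfolding cbox_interval by (intro integrable_continuous_interval continuous_on_wt) auto
  qed (use a in simp_all)
  then have "((\<lambda>b. integral {-1..1} (wt m b)) has_field_derivative
      integral {-1..1} (\<lambda>\<mu>. - (of_nat m * \<mu> * wt (Suc m) a \<mu>))) (at a)"
    using at_within_open[of a ?U] a by (simp add: cbox_interval)
  then show ?thesis
  proof (rule has_field_derivative_transform_within_open)
    show "integral {-1..1} (wt m b) = Kmom m b 0 0" if "b \<in> ?U" for b
      using Kmom_0_0[of b m] that by simp
  qed (use a in simp_all)
qed

lemma Kmom_0_0_derivative_identity: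
  assumes a: "-1 < a" "a < 1"
  shows "of_nat m * Kmom m a 0 0 + a * deriv (\<lambda>b. Kmom m b 0 0) a = of_nat m * Kmom (Suc m) a 0 0"
proof -
  have "of_nat m * Kmom m a 0 0 + a * deriv (\<lambda>b. Kmom m b 0 0) a
      = integral {-1..1} (\<lambda>\<mu>. of_nat m * wt m a \<mu>)
        + integral {-1..1} (\<lambda>\<mu>. a * - (of_nat m * \<mu> * wt (Suc m) a \<mu>))"
    unfolding DERIV_imp_deriv[OF Kmom_0_0_has_field_derivative[OF a]] Kmom_0_0[OF a] by simp
  also have "\<dots> = integral {-1..1}
      (\<lambda>\<mu>. of_nat m * wt m a \<mu> + a * - (of_nat m * \<mu> * wt (Suc m) a \<mu>))"
    by (rule integral_add[symmetric])
      (intro integrable_continuous_interval continuous_intros continuous_on_wt a)+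
  also have "\<dots> = integral {-1..1} (\<lambda>\<mu>. of_nat m * wt (Suc m) a \<mu>)"
  proof (rule integral_cong)
    fix \<mu> :: real
    assume "\<mu> \<in> {-1..1}"
    then have "1 + a * \<mu> \<noteq> 0" using one_plus_mult_pos[OF a] by force
    then show "of_nat m * wt m a \<mu> + a * - (of_nat m * \<mu> * wt (Suc m) a \<mu>)
        = of_nat m * wt (Suc m) a \<mu>"
      by (subst wt_Suc) (simp_all add: algebra_simps)
  qed
  also have "\<dots> = of_nat m * Kmom (Suc m) a 0 0" by (simp add: Kmom_0_0[OF a])
  finally show ?thesis .
qed

lemma four_beta_plus_gamma:
  assumes a: "-1 < a" "a < 1"
  shows "4 * beta a 0 + a * gamma a 0 = 4"
proof -
  have identity: "4 * Kmom 4 a 0 0 + a * deriv (\<lambda>b. Kmom 4 b 0 0) a = 4 * Kmom 5 a 0 0"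
    using Kmom_0_0_derivative_identity[OF a, of 4] by simp
  have "4 * beta a 0 + a * gamma a 0
      = (4 * Kmom 4 a 0 0 + a * deriv (\<lambda>b. Kmom 4 b 0 0) a) / Kmom 5 a 0 0"
    unfolding beta_def gamma_def by (simp add: add_divide_distrib)
  also have "\<dots> = 4"
    unfolding identity using Kmom_diag_pos[OF a, of 5 0] by simp
  finally show ?thesis .
qed

section \<open>Eigenvalues of the characteristic matrix\<close>

lemma mat_inverse_exists:
  fixes A :: "'a::field mat"
  assumes A: "A \<in> carrier_mat n n"
    and kernel: "\<And>v. v \<in> carrier_vec n \<Longrightarrow> A *\<^sub>v v = 0\<^sub>v n \<Longrightarrow> v = 0\<^sub>v n"
  obtains B where "mat_inverse A = Some B" "A * B = 1\<^sub>m n" "B * A = 1\<^sub>m n" "B \<in> carrier_mat n n"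
proof (cases "mat_inverse A")
  case None
  have "det A \<noteq> 0"
    using det_0_iff_vec_prod_zero_field[OF A] kernel by auto
  then have "A \<in> Units (ring_mat TYPE('a) n ())" by (rule det_non_zero_imp_unit[OF A])
  moreover have "A \<notin> Units (ring_mat TYPE('a) n ())" by (rule mat_inverse(1)[OF A None])
  ultimately show ?thesis by contradiction
next
  case (Some B)
  then show ?thesis using mat_inverse(2)[OF A Some] that by simp
qed

lemma mult_mat_vec_index_support:
  assumes A: "A \<in> carrier_mat n n" and x: "x \<in> carrier_vec n" and "i < n" and "J \<subseteq> {..<n}"
    and outside: "\<And>j. j < n \<Longrightarrow> j \<notin> J \<Longrightarrow> A $$ (i, j) * vec_index x j = 0"
  shows "vec_index (A *\<^sub>v x) i = (\<Sum>j\<in>J. A $$ (i, j) * vec_index x j)"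
proof -
  have "vec_index (A *\<^sub>v x) i = (\<Sum>j<n. A $$ (i, j) * vec_index x j)"
    using A x \<open>i < n\<close> by (simp add: scalar_prod_def atLeast0LessThan)
  also have "\<dots> = (\<Sum>j\<in>J. A $$ (i, j) * vec_index x j)"
    using \<open>J \<subseteq> {..<n}\<close> outside by (intro sum.mono_neutral_right) auto
  finally show ?thesis .
qed

lemma mult_mat_vec_index_diagonal:
  assumes A: "A \<in> carrier_mat n n" and x: "x \<in> carrier_vec n" and "i < n"
    and diagonal: "\<And>j. j < n \<Longrightarrow> j \<noteq> i \<Longrightarrow> A $$ (i, j) = 0"
  shows "vec_index (A *\<^sub>v x) i = A $$ (i, i) * vec_index x i"
  using mult_mat_vec_index_support[OF A x \<open>i < n\<close>, of "{i}"] \<open>i < n\<close> diagonal by simp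

lemma eigenvalue_similar_iff:
  fixes A D D' :: "'a::field mat"
  assumes "A \<in> carrier_mat n n" "D \<in> carrier_mat n n" "D' \<in> carrier_mat n n"
    and "D' * D = 1\<^sub>m n" "D * D' = 1\<^sub>m n"
  shows "eigenvalue (D' * A * D) z \<longleftrightarrow> eigenvalue A z"
proof -
  have "similar_mat (D' * A * D) A"
    using assms by (intro similar_matI[of "D' * A * D" A D' D n]) auto
  then have "char_poly (D' * A * D) = char_poly A" by (rule char_poly_similar)
  then show ?thesis
    using assms by (simp add: eigenvalue_root_char_poly[of _ n])
qed

lemma generalized_eigenvector_of_conjugate:
  fixes D D' L L' G :: "'a::field mat"
  assumes carriers: "D \<in> carrier_mat n n" "D' \<in> carrier_mat n n" "L \<in> carrier_mat n n"
      "L' \<in> carrier_mat n n" "G \<in> carrier_mat n n"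
    and inverses: "D' * D = 1\<^sub>m n" "D * D' = 1\<^sub>m n" "L * L' = 1\<^sub>m n"
    and "eigenvalue (D' * (L' * G) * D) z"
  obtains w where "w \<in> carrier_vec n" "w \<noteq> 0\<^sub>v n" "L *\<^sub>v (z \<cdot>\<^sub>v w) = G *\<^sub>v w"
proof -
  have "eigenvalue (L' * G) z"
    using assms eigenvalue_similar_iff[of "L' * G" n D D'] by auto
  then obtain w where w: "w \<in> carrier_vec n" "w \<noteq> 0\<^sub>v n" "(L' * G) *\<^sub>v w = z \<cdot>\<^sub>v w"
    using carriers unfolding eigenvalue_def eigenvector_def by auto
  have "L *\<^sub>v (z \<cdot>\<^sub>v w) = L *\<^sub>v ((L' * G) *\<^sub>v w)" using w(3) by simp
  also have "\<dots> = (L * (L' * G)) *\<^sub>v w"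
    using carriers w(1) by (intro assoc_mult_mat_vec[symmetric]) auto
  also have "L * (L' * G) = (L * L') * G"
    using carriers by (intro assoc_mult_mat[symmetric]) auto
  also have "\<dots> = G" using carriers inverses by simp
  finally show ?thesis using that w(1,2) by blast
qed

lemma generalized_eigenvalue_real_bounded:
  fixes g :: "nat \<Rightarrow> nat \<Rightarrow> real" and K :: "nat \<Rightarrow> real" and v :: "nat \<Rightarrow> complex"
  assumes K_pos: "\<And>i. i < n \<Longrightarrow> K i > 0"
    and g_sym: "\<And>i j. i < n \<Longrightarrow> j < n \<Longrightarrow> g i j = g j i"
    and bound: "\<And>x. \<bar>\<Sum>i<n. \<Sum>j<n. g i j * x i * x j\<bar> \<le> (\<Sum>i<n. K i * (x i)\<^sup>2)"
    and "c \<ge> 0" and nonzero: "\<exists>i<n. v i \<noteq> 0"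
    and eigen: "\<And>i. i < n \<Longrightarrow> of_real (K i) * (z * v i) = of_real c * (\<Sum>j<n. of_real (g i j) * v j)"
  shows "\<exists>x. z = complex_of_real x \<and> -c \<le> x \<and> x \<le> c"
proof -
  define x where "x i = Re (v i)" for i
  define y where "y i = Im (v i)" for i
  define Q where "Q = (\<Sum>i<n. K i * (cmod (v i))\<^sup>2)"
  define q where "q u = (\<Sum>i<n. \<Sum>j<n. g i j * u i * u j)" for u
  define H where "H = (\<Sum>i<n. \<Sum>j<n. of_real (g i j) * (cnj (v i) * v j))"
  have Q_pos: "Q > 0"
  proof -
    obtain i where i: "i < n" "v i \<noteq> 0" using nonzero by blast
    have "0 \<le> K j * (cmod (v j))\<^sup>2" if "j < n" for j using K_pos[OF that] by simp
    moreover have "0 < K i * (cmod (v i))\<^sup>2" using K_pos[OF i(1)] i(2) by simp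
    ultimately show ?thesis unfolding Q_def using i(1) by (intro sum_pos2[of _ i]) auto
  qed
  have "z * of_real Q = (\<Sum>i<n. cnj (v i) * (of_real (K i) * (z * v i)))"
    unfolding Q_def of_real_sum sum_distrib_left
    by (intro sum.cong refl) (simp add: complex_norm_square mult_ac del: of_real_power)
  also have "\<dots> = of_real c * H"
    unfolding H_def sum_distrib_left using eigen by (intro sum.cong refl) (simp add: sum_distrib_left mult_ac)
  finally have z_Q: "z * of_real Q = of_real c * H" .
  \<comment> \<open>The Hermitian form \<open>H\<close> is real since \<open>g\<close> is symmetric.\<close>
  have "Im H = (\<Sum>i<n. \<Sum>j<n. g i j * x i * y j) - (\<Sum>i<n. \<Sum>j<n. g i j * y i * x j)"
    unfolding H_def x_def y_def Im_sum sum_subtractf[symmetric]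
    by (intro sum.cong refl) (simp add: algebra_simps)
  also have "(\<Sum>i<n. \<Sum>j<n. g i j * y i * x j) = (\<Sum>i<n. \<Sum>j<n. g i j * x i * y j)"
    by (subst sum.swap) (intro sum.cong refl, simp add: g_sym mult_ac)
  finally have "Im H = 0" by simp
  moreover have "Re H = q x + q y"
    unfolding H_def q_def x_def y_def Re_sum sum.distrib[symmetric]
    by (intro sum.cong refl) (simp add: algebra_simps)
  ultimately have H: "H = of_real (q x + q y)" by (simp add: complex_eq_iff)
  have "Q = (\<Sum>i<n. K i * (x i)\<^sup>2) + (\<Sum>i<n. K i * (y i)\<^sup>2)"
    unfolding Q_def x_def y_def sum.distrib[symmetric]
    by (intro sum.cong refl) (simp add: cmod_power2 algebra_simps)
  then have "\<bar>q x + q y\<bar> \<le> Q"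
    using bound[of x] bound[of y] unfolding q_def by linarith
  then have "c * \<bar>q x + q y\<bar> \<le> c * Q" using \<open>c \<ge> 0\<close> by (rule mult_left_mono)
  then have "\<bar>c * (q x + q y) / Q\<bar> \<le> c"
    using Q_pos \<open>c \<ge> 0\<close> by (simp add: abs_mult pos_divide_le_eq)
  moreover have "z = of_real (c * (q x + q y) / Q)"
    using z_Q Q_pos unfolding H by (simp add: field_simps)
  ultimately show ?thesis
    unfolding abs_le_iff by (intro exI[of _ "c * (q x + q y) / Q"]) auto
qed

lemma beta_nonzero: "-1 < a \<Longrightarrow> a < 1 \<Longrightarrow> beta a k \<noteq> 0"
  using Kmom_diag_pos[of a 4 k] Kmom_diag_pos[of a 5 k] by (simp add: beta_def)

lemma Dt_index:
  assumes "i \<le> N" "j \<le> N"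
  shows "Dt N f a $$ (i, j) =
     (if i = 0 \<and> j = 0 then beta a 0
     else if i = 0 \<and> j = 1 then gamma a 0 * f 0
     else if i = 1 \<and> j = 0 then a
     else if i = 1 \<and> j = 1 then -4 * f 0
     else if 2 \<le> i \<and> j = 1 then gamma a i * (f(1 := 0)) i - 4 * (f(1 := 0)) (i - 1)
     else if 2 \<le> i \<and> j = i then beta a i
     else if 3 \<le> i \<and> j = i - 1 then a
     else 0)"
  using assms by (simp add: Dt_def Let_def)

lemma Dt_carrier: "Dt N f a \<in> carrier_mat (N + 1) (N + 1)"
  by (simp add: Dt_def Let_def)

lemma Dt_kernel_trivial:
  assumes N: "N \<ge> 1" and f0: "f 0 \<noteq> 0"
    and det_2x2: "4 * beta a 0 + a * gamma a 0 \<noteq> 0"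
    and beta: "\<And>i. 2 \<le> i \<Longrightarrow> i \<le> N \<Longrightarrow> beta a i \<noteq> 0"
    and x: "x \<in> carrier_vec (N + 1)" and Dx: "Dt N f a *\<^sub>v x = 0\<^sub>v (N + 1)"
  shows "x = 0\<^sub>v (N + 1)"
proof -
  note row = mult_mat_vec_index_support[OF Dt_carrier x]
  have row_zero: "vec_index (Dt N f a *\<^sub>v x) i = 0" if "i \<le> N" for i
    using Dx that by simp
  have row0: "beta a 0 * vec_index x 0 + gamma a 0 * f 0 * vec_index x 1 = 0"
    using row[of 0 "{0, 1}"] row_zero[of 0] N by (simp add: Dt_index)
  have row1: "a * vec_index x 0 - 4 * f 0 * vec_index x 1 = 0"
    using row[of 1 "{0, 1}"] row_zero[of 1] N by (simp add: Dt_index)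
  have "f 0 * (4 * beta a 0 + a * gamma a 0) * vec_index x 0
      = 4 * f 0 * (beta a 0 * vec_index x 0 + gamma a 0 * f 0 * vec_index x 1)
        + gamma a 0 * f 0 * (a * vec_index x 0 - 4 * f 0 * vec_index x 1)"
    by (simp add: algebra_simps)
  then have x0: "vec_index x 0 = 0" using row0 row1 f0 det_2x2 by simp
  then have x1: "vec_index x 1 = 0" using row1 f0 by simp
  have "vec_index x i = 0" if "i \<le> N" for i
    using that
  proof (induction i rule: less_induct)
    case (less i)
    show ?case
    proof (cases "i \<le> 1")
      case True
      then show ?thesis using x0 x1 by (cases i) auto
    next
      case False
      have "vec_index (Dt N f a *\<^sub>v x) i = Dt N f a $$ (i, i) * vec_index x i"
        using row[of i "{i}"] less.prems less.IH False by (force simp: Dt_index)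
      then show ?thesis using row_zero[OF less.prems] beta[of i] False less.prems
        by (simp add: Dt_index)
    qed
  qed
  then show ?thesis using x by (intro eq_vecI) auto
qed

lemma Lambdat_carrier: "Lambdat N a \<in> carrier_mat (N + 1) (N + 1)"
  by (simp add: Lambdat_def)

lemma Lambdat_index:
  "i \<le> N \<Longrightarrow> j \<le> N \<Longrightarrow> Lambdat N a $$ (i, j) = (if i = j then Kmom 5 a i i else 0)"
  by (simp add: Lambdat_def)

lemma Lambdat_kernel_trivial:
  assumes a: "-1 < a" "a < 1"
    and x: "x \<in> carrier_vec (N + 1)" and Lx: "Lambdat N a *\<^sub>v x = 0\<^sub>v (N + 1)"
  shows "x = 0\<^sub>v (N + 1)"
proof (rule eq_vecI)
  fix i
  assume "i < dim_vec (0\<^sub>v (N + 1) :: real vec)"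
  then have i: "i < N + 1" by simp
  have "vec_index (Lambdat N a *\<^sub>v x) i = Lambdat N a $$ (i, i) * vec_index x i"
    by (rule mult_mat_vec_index_diagonal[OF Lambdat_carrier x i]) (use i in \<open>simp add: Lambdat_index\<close>)
  then have "Kmom 5 a i i * vec_index x i = 0" using Lx i by (simp add: Lambdat_index)
  then show "vec_index x i = vec_index (0\<^sub>v (N + 1)) i"
    using Kmom_diag_pos[OF a, of 5 i] i by simp
qed (use x in simp)

lemma Gt_carrier: "Gt N a \<in> carrier_mat (N + 1) (N + 1)"
  by (simp add: Gt_def)

lemma Gt_index:
  assumes "i \<le> N" "j \<le> N"
  shows "Gt N a $$ (i, j) = poly_inner (\<lambda>\<mu>. \<mu> * wt 5 a \<mu>) (OP 5 a i) (OP 5 a j)"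
  using assms unfolding Gt_def poly_inner_def by (simp add: mult_ac)

lemma Gt_quadratic_form_bound:
  assumes a: "-1 < a" "a < 1"
  shows "\<bar>\<Sum>i<N + 1. \<Sum>j<N + 1. Gt N a $$ (i, j) * x i * x j\<bar> \<le> (\<Sum>i<N + 1. Kmom 5 a i i * (x i)\<^sup>2)"
proof -
  let ?P = "\<Sum>i<N + 1. Polynomial.smult (x i) (OP 5 a i)"
  have w: "continuous_on {-1..1} (wt 5 a)" by (rule continuous_on_wt[OF a])
  have "poly_inner (\<lambda>\<mu>. \<mu> * wt 5 a \<mu>) ?P ?P
      = (\<Sum>i<N + 1. \<Sum>j<N + 1. x i * x j * poly_inner (\<lambda>\<mu>. \<mu> * wt 5 a \<mu>) (OP 5 a i) (OP 5 a j))"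
    by (intro poly_inner_sum_sum continuous_intros w finite_lessThan)
  also have "\<dots> = (\<Sum>i<N + 1. \<Sum>j<N + 1. Gt N a $$ (i, j) * x i * x j)"
    by (intro sum.cong refl) (simp add: Gt_index)
  finally have G: "(\<Sum>i<N + 1. \<Sum>j<N + 1. Gt N a $$ (i, j) * x i * x j)
      = poly_inner (\<lambda>\<mu>. \<mu> * wt 5 a \<mu>) ?P ?P" ..
  have "poly_inner (wt 5 a) ?P ?P
      = (\<Sum>i<N + 1. \<Sum>j<N + 1. x i * x j * poly_inner (wt 5 a) (OP 5 a i) (OP 5 a j))"
    by (intro poly_inner_sum_sum w finite_lessThan)
  also have "\<dots> = (\<Sum>i<N + 1. \<Sum>j<N + 1. if j = i then Kmom 5 a i i * (x i)\<^sup>2 else 0)"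
    by (intro sum.cong refl)
      (simp add: OP_orthogonal[OF a] Kmom_diag_eq[OF a] power2_eq_square)
  finally have K: "(\<Sum>i<N + 1. Kmom 5 a i i * (x i)\<^sup>2) = poly_inner (wt 5 a) ?P ?P"
    by simp
  show ?thesis
    unfolding G K by (rule abs_poly_inner_mult_id_le[OF w wt_pos[OF a]])
qed

lemma Dt_invertible:
  assumes "N \<ge> 1" "f 0 \<noteq> 0" and a: "-1 < a" "a < 1"
  obtains D' where "mat_inverse (Dt N f a) = Some D'" "Dt N f a * D' = 1\<^sub>m (N + 1)"
    "D' * Dt N f a = 1\<^sub>m (N + 1)" "D' \<in> carrier_mat (N + 1) (N + 1)"
proof -
  have "v = 0\<^sub>v (N + 1)" if "v \<in> carrier_vec (N + 1)" "Dt N f a *\<^sub>v v = 0\<^sub>v (N + 1)" for v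
    using Dt_kernel_trivial[of N f a v] assms that four_beta_plus_gamma[OF a] beta_nonzero[OF a]
    by simp
  then show ?thesis using mat_inverse_exists[OF Dt_carrier] that by blast
qed

lemma Mt_eq_inverse_mult:
  assumes "-1 < a" "a < 1"
  obtains L' where "L' \<in> carrier_mat (N + 1) (N + 1)" "Lambdat N a * L' = 1\<^sub>m (N + 1)"
    "Mt N a = L' * Gt N a"
proof -
  obtain L' where "mat_inverse (Lambdat N a) = Some L'" "Lambdat N a * L' = 1\<^sub>m (N + 1)"
    "L' \<in> carrier_mat (N + 1) (N + 1)"
    using Lambdat_carrier Lambdat_kernel_trivial[OF assms] by (rule mat_inverse_exists) auto
  then show ?thesis using that unfolding Mt_def by simp
qed

lemma Lambdat_Gt_generalized_eigenvalue:
  assumes a: "-1 < a" "a < 1" and "c > 0"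
    and w: "w \<in> carrier_vec (N + 1)" "w \<noteq> 0\<^sub>v (N + 1)"
    and eigen: "map_mat of_real (Lambdat N a) *\<^sub>v (z \<cdot>\<^sub>v w) = map_mat of_real (c \<cdot>\<^sub>m Gt N a) *\<^sub>v w"
  shows "\<exists>x. z = complex_of_real x \<and> -c \<le> x \<and> x \<le> c"
proof (rule generalized_eigenvalue_real_bounded)
  show "\<exists>i<N + 1. vec_index w i \<noteq> 0"
    using w by (metis carrier_vecD eq_vecI index_zero_vec(1,2))
  show "of_real (Kmom 5 a i i) * (z * vec_index w i)
      = of_real c * (\<Sum>j<N + 1. of_real (Gt N a $$ (i, j)) * vec_index w j)" if "i < N + 1" for i
  proof -
    have "of_real (Kmom 5 a i i) * (z * vec_index w i)
        = vec_index (map_mat of_real (Lambdat N a) *\<^sub>v (z \<cdot>\<^sub>v w)) i"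
      using that w(1)
      by (subst mult_mat_vec_index_diagonal[of "map_mat of_real (Lambdat N a)" "N + 1"])
        (auto simp: Lambdat_def)
    also have "\<dots> = (\<Sum>j<N + 1. of_real (c * Gt N a $$ (i, j)) * vec_index w j)"
      unfolding eigen using that w(1) Gt_carrier[of N a]
      by (simp add: scalar_prod_def atLeast0LessThan)
    finally show ?thesis by (simp only: sum_distrib_left of_real_mult mult.assoc)
  qed
  show "\<bar>\<Sum>i<N + 1. \<Sum>j<N + 1. Gt N a $$ (i, j) * x i * x j\<bar> \<le> (\<Sum>i<N + 1. Kmom 5 a i i * (x i)\<^sup>2)"
    for x by (rule Gt_quadratic_form_bound[OF a])
  show "Gt N a $$ (i, j) = Gt N a $$ (j, i)" if "i < N + 1" "j < N + 1" for i j
    using that by (simp add: Gt_index poly_inner_commute)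
qed (use Kmom_diag_pos[OF a] \<open>c > 0\<close> in auto)

theorem corollary1:
  fixes N :: nat and c \<alpha> :: real and f :: "nat \<Rightarrow> real"
  assumes "N \<ge> 1" and "c > 0" and "-1 < \<alpha>" and "\<alpha> < 1" and "f 0 \<noteq> 0"
  shows "\<forall>z::complex. eigenvalue (map_mat complex_of_real
            (c \<cdot>\<^sub>m (the (mat_inverse (Dt N f \<alpha>)) * Mt N \<alpha> * Dt N f \<alpha>))) z
          \<longrightarrow> (\<exists>x::real. z = complex_of_real x \<and> -c \<le> x \<and> x \<le> c)"
proof (intro allI impI)
  fix z :: complex
  assume eigenvalue: "eigenvalue (map_mat complex_of_real
      (c \<cdot>\<^sub>m (the (mat_inverse (Dt N f \<alpha>)) * Mt N \<alpha> * Dt N f \<alpha>))) z"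
  let ?R = "map_mat complex_of_real" and ?n = "N + 1"
  let ?D = "Dt N f \<alpha>" and ?L = "Lambdat N \<alpha>" and ?G = "Gt N \<alpha>"
  have a: "-1 < \<alpha>" "\<alpha> < 1" by fact+
  obtain D' where D': "mat_inverse ?D = Some D'" "?D * D' = 1\<^sub>m ?n" "D' * ?D = 1\<^sub>m ?n"
    "D' \<in> carrier_mat ?n ?n"
    using Dt_invertible[of N f \<alpha>] assms(1,5) a by blast
  obtain L' where L': "L' \<in> carrier_mat ?n ?n" "?L * L' = 1\<^sub>m ?n" "Mt N \<alpha> = L' * ?G"
    using Mt_eq_inverse_mult[OF a] by blast
  note carriers = Dt_carrier[of N f \<alpha>] Lambdat_carrier[of N \<alpha>] Gt_carrier[of N \<alpha>] D'(4) L'(1)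
  have "c \<cdot>\<^sub>m (D' * Mt N \<alpha> * ?D) = D' * (L' * (c \<cdot>\<^sub>m ?G)) * ?D"
    unfolding L'(3) using carriers
    by (simp add: mult_smult_distrib[of _ ?n ?n _ ?n] mult_smult_assoc_mat[of _ ?n ?n _ ?n])
  then have "eigenvalue (?R D' * (?R L' * ?R (c \<cdot>\<^sub>m ?G)) * ?R ?D) z"
    using eigenvalue carriers unfolding D'(1) by (simp add: of_real_hom.mat_hom_mult[of _ ?n ?n _ ?n])
  moreover have "?R D' * ?R ?D = 1\<^sub>m ?n" "?R ?D * ?R D' = 1\<^sub>m ?n" "?R ?L * ?R L' = 1\<^sub>m ?n"
    using carriers D'(2,3) L'(2)
    by (simp_all flip: of_real_hom.mat_hom_mult add: of_real_hom.mat_hom_one)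
  ultimately obtain w where "w \<in> carrier_vec ?n" "w \<noteq> 0\<^sub>v ?n"
    "?R ?L *\<^sub>v (z \<cdot>\<^sub>v w) = ?R (c \<cdot>\<^sub>m ?G) *\<^sub>v w"
    using generalized_eigenvector_of_conjugate[of "?R ?D" ?n "?R D'" "?R ?L" "?R L'" "?R (c \<cdot>\<^sub>m ?G)" z]
      carriers by auto
  then show "\<exists>x. z = complex_of_real x \<and> -c \<le> x \<and> x \<le> c"
    by (rule Lambdat_Gt_generalized_eigenvalue[OF a assms(2)])
qed

end
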